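(* Let $\mathcal{H}$ be an $n$-dimensional (real or complex) Hilbert space, let $F=\{f_i\}_{i=1}^N$ be a tight frame for $\mathcal{H}$, and let $\{q_i\}_{i=1}^N$ be the weight number sequence associated with a probability sequence $\{p_i\}_{i=1}^N$. Then $(F,S_F^{-1}F)$ is the unique 1-erasure POD-pair among the dual pairs $(F,G)$ with $G$ a dual of $F$ if and only if $(F,S_F^{-1}F)$ is the unique 1-erasure PASOD-pair among the dual pairs $(F,G)$ with $G$ a dual of $F$.
   Context: A finite sequence $F=\{f_i\}_{i=1}^N$ in $\mathcal{H}$ is a frame if there are $A,B>0$ with $A\|f\|^2\le\sum_{i=1}^N|\langle f,f_i\rangle|^2\le B\|f\|^2$ for all $f$; it is tight if one can take $A=B$. The frame operator is $S_Ff=\sum_i\langle f,f_i\rangle f_i$; canonical dual $S_F^{-1}F=\{S_F^{-1}f_i\}_{i=1}^N$. A frame $G=\{g_i\}_{i=1}^N$ is a dual of $F$ if $f=\sum_i\langle f,f_i\rangle g_i=\sum_i\langle f,g_i\rangle f_i$ for all $f$; then $(F,G)$ is an $(N,n)$ dual pair. A probability sequence is $\{p_i\}_{i=1}^N$ with $0\le p_i\le1$, $\sum p_i=1$; weight numbers $q_i=\frac{\sum_{j} p_j}{\sum_{j} p_j-p_i}\cdot\frac{N-1}{n}$. For $\Lambda\subseteq\{1,\dots,N\}$ the error operator is $E_{\Lambda,(F,G)}f=\sum_{i\in\Lambda}q_i\langle f,f_i\rangle g_i$. Let $\mathcal{O}_P^{(1)}(F,G)=\max_{|\Lambda|=1}\|E_{\Lambda,(F,G)}\|$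 and $\mathcal{A}_P^{(1)}(F,G)=\max_{|\Lambda|=1}\frac{\|E_{\Lambda,(F,G)}\|+\rho(E_{\Lambda,(F,G)})}{2}$ ($\rho$ = spectral radius); let $\mathcal{O}_P^{(1)}$ and $\mathcal{A}_P^{(1)}$ be their infima over all $(N,n)$ dual pairs in $\mathcal{H}$. A dual pair is a 1-erasure POD-pair if $\mathcal{O}_P^{(1)}(F,G)=\mathcal{O}_P^{(1)}$, and a 1-erasure PASOD-pair if $\mathcal{A}_P^{(1)}(F,G)=\mathcal{A}_P^{(1)}$. *)

theory Defs
  imports "Jordan_Normal_Form.Spectral_Radius"
begin

text \<open>The n-dimensional Hilbert space H is modelled as the coordinate space K^n, K being
  either the reals (K = range of_real) or the complex numbers (K = UNIV), realised inside
  complex n-vectors. Inner product: linear in the first argument, conjugate linear in the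
  second.  Finite sequences are maps nat to vectors, indexed by 1..N.\<close>

definition hspace :: "complex set \<Rightarrow> nat \<Rightarrow> complex vec set" where
  "hspace K n = {v \<in> carrier_vec n. \<forall>r<n. v $ r \<in> K}"

definition ip :: "complex vec \<Rightarrow> complex vec \<Rightarrow> complex" where
  "ip f g = f \<bullet>c g"

definition vnorm :: "complex vec \<Rightarrow> real" where
  "vnorm v = sqrt (Re (v \<bullet>c v))"

definition lincomb :: "nat \<Rightarrow> nat \<Rightarrow> (nat \<Rightarrow> complex) \<Rightarrow> (nat \<Rightarrow> complex vec) \<Rightarrow> complex vec" where
  "lincomb n N c G = vec n (\<lambda>r. \<Sum>i\<in>{1..N}. c i * G i $ r)"

definition is_frame :: "complex set \<Rightarrow> nat \<Rightarrow> nat \<Rightarrow> (nat \<Rightarrow> complex vec) \<Rightarrow> bool" where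
  "is_frame K n N F \<longleftrightarrow> (\<forall>i\<in>{1..N}. F i \<in> hspace K n) \<and>
     (\<exists>A B. A > 0 \<and> B > 0 \<and> (\<forall>f\<in>hspace K n.
        A * (vnorm f)\<^sup>2 \<le> (\<Sum>i\<in>{1..N}. (cmod (ip f (F i)))\<^sup>2) \<and>
        (\<Sum>i\<in>{1..N}. (cmod (ip f (F i)))\<^sup>2) \<le> B * (vnorm f)\<^sup>2))"

definition is_tight_frame :: "complex set \<Rightarrow> nat \<Rightarrow> nat \<Rightarrow> (nat \<Rightarrow> complex vec) \<Rightarrow> bool" where
  "is_tight_frame K n N F \<longleftrightarrow> (\<forall>i\<in>{1..N}. F i \<in> hspace K n) \<and>
     (\<exists>A. A > 0 \<and> (\<forall>f\<in>hspace K n.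
        (\<Sum>i\<in>{1..N}. (cmod (ip f (F i)))\<^sup>2) = A * (vnorm f)\<^sup>2))"

definition frame_op :: "nat \<Rightarrow> nat \<Rightarrow> (nat \<Rightarrow> complex vec) \<Rightarrow> complex vec \<Rightarrow> complex vec" where
  "frame_op n N F f = lincomb n N (\<lambda>i. ip f (F i)) F"

definition canon_dual :: "complex set \<Rightarrow> nat \<Rightarrow> nat \<Rightarrow> (nat \<Rightarrow> complex vec) \<Rightarrow> nat \<Rightarrow> complex vec" where
  "canon_dual K n N F i = the_inv_into (hspace K n) (frame_op n N F) (F i)"

definition is_dual :: "complex set \<Rightarrow> nat \<Rightarrow> nat \<Rightarrow> (nat \<Rightarrow> complex vec) \<Rightarrow> (nat \<Rightarrow> complex vec) \<Rightarrow> bool" where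
  "is_dual K n N F G \<longleftrightarrow> is_frame K n N G \<and>
     (\<forall>f\<in>hspace K n. f = lincomb n N (\<lambda>i. ip f (F i)) G \<and> f = lincomb n N (\<lambda>i. ip f (G i)) F)"

definition dual_pair :: "complex set \<Rightarrow> nat \<Rightarrow> nat \<Rightarrow> (nat \<Rightarrow> complex vec) \<Rightarrow> (nat \<Rightarrow> complex vec) \<Rightarrow> bool" where
  "dual_pair K n N F G \<longleftrightarrow> is_frame K n N F \<and> is_dual K n N F G"

definition prob_seq :: "nat \<Rightarrow> (nat \<Rightarrow> real) \<Rightarrow> bool" where
  "prob_seq N p \<longleftrightarrow> (\<forall>i\<in>{1..N}. 0 \<le> p i \<and> p i \<le> 1) \<and> (\<Sum>i\<in>{1..N}. p i) = 1"

definition weight :: "nat \<Rightarrow> nat \<Rightarrow> (nat \<Rightarrow> real) \<Rightarrow> nat \<Rightarrow> real" where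
  "weight n N p i = (\<Sum>j\<in>{1..N}. p j) / ((\<Sum>j\<in>{1..N}. p j) - p i) * ((real N - 1) / real n)"

definition err_op :: "nat \<Rightarrow> nat \<Rightarrow> (nat \<Rightarrow> real) \<Rightarrow> (nat \<Rightarrow> complex vec) \<Rightarrow> (nat \<Rightarrow> complex vec) \<Rightarrow> nat set \<Rightarrow> complex mat" where
  "err_op n N p F G \<Lambda> = mat n n (\<lambda>(r, s). \<Sum>i\<in>\<Lambda>. complex_of_real (weight n N p i) * G i $ r * cnj (F i $ s))"

definition opnorm :: "complex set \<Rightarrow> nat \<Rightarrow> complex mat \<Rightarrow> real" where
  "opnorm K n A = Sup {vnorm (A *\<^sub>v v) | v. v \<in> hspace K n \<and> vnorm v = 1}"

definition O1 :: "complex set \<Rightarrow> nat \<Rightarrow> nat \<Rightarrow> (nat \<Rightarrow> real) \<Rightarrow> (nat \<Rightarrow> complex vec) \<Rightarrow> (nat \<Rightarrow> complex vec) \<Rightarrow> real" where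
  "O1 K n N p F G = Max {opnorm K n (err_op n N p F G \<Lambda>) | \<Lambda>. \<Lambda> \<subseteq> {1..N} \<and> card \<Lambda> = 1}"

definition A1 :: "complex set \<Rightarrow> nat \<Rightarrow> nat \<Rightarrow> (nat \<Rightarrow> real) \<Rightarrow> (nat \<Rightarrow> complex vec) \<Rightarrow> (nat \<Rightarrow> complex vec) \<Rightarrow> real" where
  "A1 K n N p F G = Max {(opnorm K n (err_op n N p F G \<Lambda>) + spectral_radius (err_op n N p F G \<Lambda>)) / 2
      | \<Lambda>. \<Lambda> \<subseteq> {1..N} \<and> card \<Lambda> = 1}"

definition O1_opt :: "complex set \<Rightarrow> nat \<Rightarrow> nat \<Rightarrow> (nat \<Rightarrow> real) \<Rightarrow> real" where
  "O1_opt K n N p = Inf {O1 K n N p F G | F G. dual_pair K n N F G}"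

definition A1_opt :: "complex set \<Rightarrow> nat \<Rightarrow> nat \<Rightarrow> (nat \<Rightarrow> real) \<Rightarrow> real" where
  "A1_opt K n N p = Inf {A1 K n N p F G | F G. dual_pair K n N F G}"

definition is_POD_pair :: "complex set \<Rightarrow> nat \<Rightarrow> nat \<Rightarrow> (nat \<Rightarrow> real) \<Rightarrow> (nat \<Rightarrow> complex vec) \<Rightarrow> (nat \<Rightarrow> complex vec) \<Rightarrow> bool" where
  "is_POD_pair K n N p F G \<longleftrightarrow> dual_pair K n N F G \<and> O1 K n N p F G = O1_opt K n N p"

definition is_PASOD_pair :: "complex set \<Rightarrow> nat \<Rightarrow> nat \<Rightarrow> (nat \<Rightarrow> real) \<Rightarrow> (nat \<Rightarrow> complex vec) \<Rightarrow> (nat \<Rightarrow> complex vec) \<Rightarrow> bool" where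
  "is_PASOD_pair K n N p F G \<longleftrightarrow> dual_pair K n N F G \<and> A1 K n N p F G = A1_opt K n N p"

end

theory Submission
  imports Defs "HOL-Analysis.Convex"
begin

text \<open>For a dual pair (F, G) every single-erasure error operator is rank one, with norm
  \<open>q\<^sub>i \<parallel>g\<^sub>i\<parallel> \<parallel>f\<^sub>i\<parallel>\<close> and spectral radius \<open>q\<^sub>i |\<langle>g\<^sub>i, f\<^sub>i\<rangle>|\<close>.
  The trace identity \<open>\<Sum> \<langle>g\<^sub>i, f\<^sub>i\<rangle> = n = \<Sum> 1/q\<^sub>i\<close> forces some spectral radius to be at
  least 1, so \<open>1 \<le> A1 \<le> O1\<close>, and \<open>O1 = 1\<close> exactly when \<open>A1 = 1\<close>.
  A tight frame has \<open>N \<ge> n\<close>. If \<open>N > n\<close>, a Parseval frame with squared norms \<open>1/q\<^sub>i\<close>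
  (built by repeatedly splitting and rotating vectors) has \<open>O1 = A1 = 1\<close>, so both optima are 1
  and POD-pairs and PASOD-pairs coincide. If \<open>N = n\<close>, every dual is biorthogonal to F, hence
  the canonical one, and it attains \<open>max q\<^sub>i\<close>, the lower bound for both measures; then both
  sides of the equivalence hold.\<close>

section \<open>Inner product on coordinate space\<close>

lemma ip_eq_sum: "dim_vec w = n \<Longrightarrow> ip v w = (\<Sum>r<n. v $ r * cnj (w $ r))"
  unfolding ip_def scalar_prod_def by (simp add: atLeast0LessThan)

lemma ip_self_sum: "ip v v = of_real (\<Sum>r<dim_vec v. (cmod (v $ r))\<^sup>2)"
  unfolding of_real_sum complex_norm_square by (rule ip_eq_sum) simp

lemma vnorm_eq_sqrt_sum: "vnorm v = sqrt (\<Sum>r<dim_vec v. (cmod (v $ r))\<^sup>2)"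
  unfolding vnorm_def ip_self_sum[unfolded ip_def] by simp

lemma vnorm_nonneg: "0 \<le> vnorm v"
  unfolding vnorm_eq_sqrt_sum by (simp add: sum_nonneg)

lemma vnorm_power2: "(vnorm v)\<^sup>2 = (\<Sum>r<dim_vec v. (cmod (v $ r))\<^sup>2)"
  unfolding vnorm_eq_sqrt_sum by (simp add: sum_nonneg)

lemma ip_self: "ip v v = of_real ((vnorm v)\<^sup>2)"
  unfolding vnorm_power2 by (rule ip_self_sum)

lemma ip_commute: "v \<in> carrier_vec n \<Longrightarrow> w \<in> carrier_vec n \<Longrightarrow> ip w v = cnj (ip v w)"
  by (simp add: ip_eq_sum mult.commute)

lemma ip_eq_sum_carrier: "w \<in> carrier_vec n \<Longrightarrow> ip v w = (\<Sum>r<n. v $ r * cnj (w $ r))"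
  by (simp add: ip_eq_sum)

lemma ip_smult_left: "v \<in> carrier_vec n \<Longrightarrow> w \<in> carrier_vec n \<Longrightarrow> ip (c \<cdot>\<^sub>v v) w = c * ip v w"
  by (simp add: ip_eq_sum sum_distrib_left mult.assoc)

lemma ip_smult_right: "ip v (c \<cdot>\<^sub>v w) = cnj c * ip v w"
  by (simp add: ip_eq_sum sum_distrib_left algebra_simps)

lemma ip_add_left:
  "u \<in> carrier_vec n \<Longrightarrow> v \<in> carrier_vec n \<Longrightarrow> w \<in> carrier_vec n \<Longrightarrow> ip (u + v) w = ip u w + ip v w"
  by (simp add: ip_eq_sum sum.distrib algebra_simps)

lemma ip_add_right:
  "u \<in> carrier_vec n \<Longrightarrow> v \<in> carrier_vec n \<Longrightarrow> w \<in> carrier_vec n \<Longrightarrow> ip u (v + w) = ip u v + ip u w"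
  by (simp add: ip_eq_sum sum.distrib algebra_simps)

lemma ip_unit_vec_left: "v \<in> carrier_vec n \<Longrightarrow> k < n \<Longrightarrow> ip (unit_vec n k) v = cnj (v $ k)"
  by (simp add: ip_eq_sum unit_vec_def if_distrib[of "\<lambda>x. x * _"] cong: if_cong)

lemma ip_unit_vec_right: "v \<in> carrier_vec n \<Longrightarrow> k < n \<Longrightarrow> ip v (unit_vec n k) = v $ k"
  using ip_unit_vec_left[of v n k] ip_commute[of "unit_vec n k" n v] by simp

lemma vnorm_smult: "vnorm (c \<cdot>\<^sub>v v) = cmod c * vnorm v"
proof -
  have "(vnorm (c \<cdot>\<^sub>v v))\<^sup>2 = (cmod c * vnorm v)\<^sup>2"
    by (simp add: vnorm_power2 power_mult_distrib norm_mult sum_distrib_left)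
  then show ?thesis
    using vnorm_nonneg by (simp add: power2_eq_iff_nonneg)
qed

lemma cmod_ip_le:
  assumes "dim_vec v = dim_vec w"
  shows "cmod (ip v w) \<le> vnorm v * vnorm w"
proof -
  let ?d = "dim_vec w"
  have "cmod (ip v w) \<le> (\<Sum>r<?d. cmod (v $ r) * cmod (w $ r))"
    unfolding ip_eq_sum[OF refl] by (rule order_trans[OF norm_sum]) (simp add: norm_mult)
  also have "\<dots> \<le> sqrt ((vnorm v)\<^sup>2 * (vnorm w)\<^sup>2)"
    using Cauchy_Schwarz_ineq_sum[of "\<lambda>r. cmod (v $ r)" "\<lambda>r. cmod (w $ r)" "{..<?d}"] assms
    by (intro real_le_rsqrt) (simp add: vnorm_power2)
  also have "\<dots> = vnorm v * vnorm w"
    by (simp add: real_sqrt_mult vnorm_nonneg)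
  finally show ?thesis .
qed

lemma vnorm_unit_vec: "k < n \<Longrightarrow> vnorm (unit_vec n k) = 1"
proof -
  assume k: "k < n"
  have "(\<Sum>r<n. (cmod (unit_vec n k $ r))\<^sup>2) = (\<Sum>r<n. if r = k then 1 else 0)"
    by (rule sum.cong) (auto simp: unit_vec_def)
  then show ?thesis
    using k by (simp add: vnorm_eq_sqrt_sum)
qed

lemma hspace_carrier: "v \<in> hspace K n \<Longrightarrow> v \<in> carrier_vec n"
  unfolding hspace_def by auto

lemma hspace_dim: "v \<in> hspace K n \<Longrightarrow> dim_vec v = n"
  unfolding hspace_def by auto

lemma hspace_smult_real:
  "K = \<real> \<or> K = UNIV \<Longrightarrow> v \<in> hspace K n \<Longrightarrow> of_real c \<cdot>\<^sub>v v \<in> hspace K n"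
  unfolding hspace_def by (auto simp: Reals_mult)

lemma hspace_add:
  "K = \<real> \<or> K = UNIV \<Longrightarrow> u \<in> hspace K n \<Longrightarrow> v \<in> hspace K n \<Longrightarrow> u + v \<in> hspace K n"
  unfolding hspace_def by (auto simp: Reals_add)

lemma unit_vec_hspace: "K = \<real> \<or> K = UNIV \<Longrightarrow> k < n \<Longrightarrow> unit_vec n k \<in> hspace K n"
  unfolding hspace_def by auto

lemma hspace_real_subset: "K = \<real> \<or> K = UNIV \<Longrightarrow> hspace \<real> n \<subseteq> hspace K n"
  unfolding hspace_def by auto

lemma ip_Reals: "u \<in> hspace \<real> n \<Longrightarrow> v \<in> hspace \<real> n \<Longrightarrow> ip u v \<in> \<real>"
  unfolding hspace_def
  by (auto simp: ip_eq_sum Reals_cnj_iff[THEN iffD1] intro!: sum_in_Reals Reals_mult)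

lemma exists_unit_vec_ip_eq_vnorm:
  assumes K: "K = \<real> \<or> K = UNIV" and n: "1 \<le> n" and f: "f \<in> hspace K n"
  obtains v where "v \<in> hspace K n" "vnorm v = 1" "cmod (ip v f) = vnorm f"
proof (cases "vnorm f = 0")
  case True
  let ?e = "unit_vec n 0"
  have "cmod (ip ?e f) \<le> vnorm ?e * vnorm f"
    using f n by (intro cmod_ip_le) (simp add: hspace_dim)
  then have "cmod (ip ?e f) = vnorm f"
    using True norm_ge_zero[of "ip ?e f"] by simp
  then show ?thesis
    using that[of ?e] unit_vec_hspace[OF K, of 0 n] vnorm_unit_vec[of 0 n] n by simp
next
  case False
  then have pos: "0 < vnorm f"
    using vnorm_nonneg[of f] by simp
  let ?v = "of_real (1 / vnorm f) \<cdot>\<^sub>v f"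
  have "ip ?v f = of_real ((vnorm f)\<^sup>2 / vnorm f)"
    using hspace_carrier[OF f] by (simp add: ip_smult_left ip_self)
  then have "cmod (ip ?v f) = vnorm f"
    using pos by (simp add: power2_eq_square)
  moreover have "vnorm ?v = 1"
    using pos by (simp add: vnorm_smult norm_divide)
  ultimately show ?thesis
    using that[of ?v] hspace_smult_real[OF K f, of "1 / vnorm f"] by simp
qed

section \<open>Rank-one operators\<close>

definition rank_one :: "nat \<Rightarrow> complex vec \<Rightarrow> complex vec \<Rightarrow> complex mat" where
  "rank_one n g f = mat n n (\<lambda>(r, s). g $ r * cnj (f $ s))"

lemma rank_one_carrier: "rank_one n g f \<in> carrier_mat n n"
  unfolding rank_one_def by simp

lemma rank_one_mult_vec:
  assumes "v \<in> carrier_vec n" "f \<in> carrier_vec n" "g \<in> carrier_vec n"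
  shows "rank_one n g f *\<^sub>v v = ip v f \<cdot>\<^sub>v g"
  using assms
  by (intro eq_vecI) (auto simp: rank_one_def ip_eq_sum scalar_prod_def atLeast0LessThan
      sum_distrib_left algebra_simps intro!: sum.cong)

lemma opnorm_rank_one:
  assumes K: "K = \<real> \<or> K = UNIV" and n: "1 \<le> n"
    and f: "f \<in> hspace K n" and g: "g \<in> carrier_vec n"
  shows "opnorm K n (rank_one n g f) = vnorm g * vnorm f"
proof -
  have image: "vnorm (rank_one n g f *\<^sub>v v) = cmod (ip v f) * vnorm g" if "v \<in> hspace K n" for v
    using that f g by (simp add: rank_one_mult_vec hspace_carrier vnorm_smult)
  have upper: "cmod (ip v f) * vnorm g \<le> vnorm f * vnorm g" if "v \<in> hspace K n" "vnorm v = 1" for v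
    using cmod_ip_le[of v f] that f vnorm_nonneg[of g] by (simp add: hspace_dim mult_right_mono)
  obtain v where v: "v \<in> hspace K n" "vnorm v = 1" "cmod (ip v f) = vnorm f"
    using exists_unit_vec_ip_eq_vnorm[OF K n f] .
  show ?thesis
    unfolding opnorm_def
  proof (rule cSup_eq_maximum)
    have "vnorm (rank_one n g f *\<^sub>v v) = vnorm g * vnorm f"
      using image[OF v(1)] v(3) by simp
    then show "vnorm g * vnorm f \<in> {vnorm (rank_one n g f *\<^sub>v v) |v. v \<in> hspace K n \<and> vnorm v = 1}"
      using v(1,2) by (auto intro!: exI[of _ v])
  next
    fix x
    assume "x \<in> {vnorm (rank_one n g f *\<^sub>v v) |v. v \<in> hspace K n \<and> vnorm v = 1}"
    then obtain u where "u \<in> hspace K n" "vnorm u = 1" "x = vnorm (rank_one n g f *\<^sub>v u)"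
      by blast
    then show "x \<le> vnorm g * vnorm f"
      using image[of u] upper[of u] by (simp add: mult.commute)
  qed
qed

lemma spectral_radius_rank_one:
  assumes n: "1 \<le> n" and f: "f \<in> carrier_vec n" and g: "g \<in> carrier_vec n"
  shows "spectral_radius (rank_one n g f) = cmod (ip g f)"
proof -
  let ?E = "rank_one n g f"
  have E: "?E \<in> carrier_mat n n"
    by (rule rank_one_carrier)
  \<comment> \<open>An eigenvector v for k \<noteq> 0 is a multiple of g, which forces k = <g, f>.\<close>
  have eigenvalue: "k = 0 \<or> k = ip g f" if "k \<in> spectrum ?E" for k
  proof -
    obtain v where v: "v \<in> carrier_vec n" "v \<noteq> 0\<^sub>v n" "ip v f \<cdot>\<^sub>v g = k \<cdot>\<^sub>v v"
      using \<open>k \<in> spectrum ?E\<close> E f g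
      by (auto simp: spectrum_def eigenvalue_def eigenvector_def rank_one_mult_vec)
    have "ip v f = 0 \<or> k = ip g f"
      using arg_cong[OF v(3), of "\<lambda>x. ip x f"] v(1) f g by (auto simp: ip_smult_left)
    moreover have "k = 0" if "ip v f = 0"
    proof -
      obtain r where "r < n" "v $ r \<noteq> 0"
        using v(1,2) by (metis eq_vecI carrier_vecD index_zero_vec)
      then show ?thesis
        using arg_cong[OF v(3), of "\<lambda>x. x $ r"] that v(1) g by simp
    qed
    ultimately show ?thesis
      by blast
  qed
  obtain k where k: "k \<in> spectrum ?E" "spectral_radius ?E = cmod k"
    using spectral_radius_mem_max(1)[OF E] n by auto
  have "ip g f \<in> spectrum ?E" if "ip g f \<noteq> 0"
  proof -
    have "g \<noteq> 0\<^sub>v n"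
      using that f by (auto simp: ip_eq_sum)
    then show ?thesis
      using E f g by (auto simp: spectrum_def eigenvalue_def eigenvector_def rank_one_mult_vec)
  qed
  then have "cmod (ip g f) \<le> spectral_radius ?E"
    using spectral_radius_mem_max(2)[OF E] n k by (cases "ip g f = 0") auto
  moreover have "spectral_radius ?E \<le> cmod (ip g f)"
    using eigenvalue[OF k(1)] k(2) by auto
  ultimately show ?thesis
    by simp
qed

lemma err_op_singleton:
  "G i \<in> carrier_vec n \<Longrightarrow>
   err_op n N p F G {i} = rank_one n (of_real (weight n N p i) \<cdot>\<^sub>v G i) (F i)"
  unfolding err_op_def rank_one_def by (intro eq_matI) auto


section \<open>Dual pairs\<close>

lemma lincomb_index: "r < n \<Longrightarrow> lincomb n N c G $ r = (\<Sum>i\<in>{1..N}. c i * G i $ r)"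
  unfolding lincomb_def by simp

lemma lincomb_cong:
  "(\<And>i. i \<in> {1..N} \<Longrightarrow> c i = d i) \<Longrightarrow> (\<And>i. i \<in> {1..N} \<Longrightarrow> G i = H i) \<Longrightarrow>
   lincomb n N c G = lincomb n N d H"
  unfolding lincomb_def by (intro eq_vecI) (auto intro!: sum.cong)

lemma lincomb_smult_vec:
  "\<forall>i\<in>{1..N}. G i \<in> carrier_vec n \<Longrightarrow>
   lincomb n N c (\<lambda>i. a \<cdot>\<^sub>v G i) = a \<cdot>\<^sub>v lincomb n N c G"
  unfolding lincomb_def
  by (rule eq_vecI) (auto simp: sum_distrib_left algebra_simps intro!: sum.cong)

lemma lincomb_smult_coeff: "lincomb n N (\<lambda>i. a * c i) G = a \<cdot>\<^sub>v lincomb n N c G"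
  unfolding lincomb_def by (rule eq_vecI) (simp_all add: sum_distrib_left algebra_simps)

lemma ip_lincomb_left:
  assumes "g \<in> carrier_vec n" and "\<And>i. i \<in> {1..N} \<Longrightarrow> G i \<in> carrier_vec n"
  shows "ip (lincomb n N c G) g = (\<Sum>i\<in>{1..N}. c i * ip (G i) g)"
proof -
  have "ip (lincomb n N c G) g = (\<Sum>r<n. \<Sum>i\<in>{1..N}. c i * (G i $ r * cnj (g $ r)))"
    using assms(1) by (simp add: ip_eq_sum lincomb_index sum_distrib_right mult.assoc)
  also have "\<dots> = (\<Sum>i\<in>{1..N}. c i * ip (G i) g)"
    using assms by (subst sum.swap) (auto simp: ip_eq_sum sum_distrib_left intro!: sum.cong)
  finally show ?thesis .
qed

lemma dual_synthesis_entries: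
  assumes K: "K = \<real> \<or> K = UNIV" and dual: "is_dual K n N F G"
    and F: "\<And>i. i \<in> {1..N} \<Longrightarrow> F i \<in> carrier_vec n" and r: "r < n" and s: "s < n"
  shows "(\<Sum>i\<in>{1..N}. G i $ r * cnj (F i $ s)) = (if r = s then 1 else 0)"
proof -
  have "unit_vec n s = lincomb n N (\<lambda>i. ip (unit_vec n s) (F i)) G"
    using dual unit_vec_hspace[OF K s] unfolding is_dual_def by blast
  then have "unit_vec n s $ r = lincomb n N (\<lambda>i. ip (unit_vec n s) (F i)) G $ r"
    by (rule arg_cong)
  also have "\<dots> = (\<Sum>i\<in>{1..N}. G i $ r * cnj (F i $ s))"
    using r s F by (auto simp: lincomb_index ip_unit_vec_left mult.commute intro!: sum.cong)
  finally show ?thesis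
    using r s by simp
qed

lemma dual_trace:
  assumes K: "K = \<real> \<or> K = UNIV" and dual: "is_dual K n N F G"
    and F: "\<And>i. i \<in> {1..N} \<Longrightarrow> F i \<in> carrier_vec n"
  shows "(\<Sum>i\<in>{1..N}. ip (G i) (F i)) = of_nat n"
proof -
  have "(\<Sum>i\<in>{1..N}. ip (G i) (F i)) = (\<Sum>i\<in>{1..N}. \<Sum>r<n. G i $ r * cnj (F i $ r))"
    using F by (intro sum.cong refl) (simp add: ip_eq_sum_carrier)
  also have "\<dots> = (\<Sum>r<n. \<Sum>i\<in>{1..N}. G i $ r * cnj (F i $ r))"
    by (rule sum.swap)
  also have "\<dots> = (\<Sum>r<n. 1)"
    using dual_synthesis_entries[OF K dual F] by simp
  finally show ?thesis
    by simp
qed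

lemma dual_pair_hspace:
  "dual_pair K n N F G \<Longrightarrow> i \<in> {1..N} \<Longrightarrow> F i \<in> hspace K n \<and> G i \<in> hspace K n"
  unfolding dual_pair_def is_dual_def is_frame_def by auto

lemma dual_pair_trace_le:
  assumes K: "K = \<real> \<or> K = UNIV" and pair: "dual_pair K n N F G"
  shows "real n \<le> (\<Sum>i\<in>{1..N}. cmod (ip (G i) (F i)))"
proof -
  have "real n = cmod (\<Sum>i\<in>{1..N}. ip (G i) (F i))"
    using pair dual_trace[OF K, of n N F G] dual_pair_hspace[OF pair] hspace_carrier
    unfolding dual_pair_def by (metis norm_of_nat)
  also have "\<dots> \<le> (\<Sum>i\<in>{1..N}. cmod (ip (G i) (F i)))"
    by (rule norm_sum)
  finally show ?thesis .
qed

lemma square_dual_biorthogonal: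
  assumes K: "K = \<real> \<or> K = UNIV" and dual: "is_dual K n n F G"
    and F: "\<And>i. i \<in> {1..n} \<Longrightarrow> F i \<in> carrier_vec n" and i: "i \<in> {1..n}" and j: "j \<in> {1..n}"
  shows "ip (G j) (F i) = (if i = j then 1 else 0)"
proof -
  define GM where "GM = mat n n (\<lambda>(r, k). G (Suc k) $ r)"
  define FM where "FM = mat n n (\<lambda>(k, s). cnj (F (Suc k) $ s))"
  have "GM * FM = 1\<^sub>m n"
  proof (rule eq_matI)
    fix r s assume "r < dim_row (1\<^sub>m n)" "s < dim_col (1\<^sub>m n)"
    then have rs: "r < n" "s < n"
      by auto
    have "(GM * FM) $$ (r, s) = (\<Sum>k\<in>{1..n}. G k $ r * cnj (F k $ s))"
      using rs unfolding GM_def FM_def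
      by (simp add: scalar_prod_def atLeast0LessThan sum.atLeast1_atMost_eq)
    then show "(GM * FM) $$ (r, s) = 1\<^sub>m n $$ (r, s)"
      using dual_synthesis_entries[OF K dual F rs] rs by simp
  qed (auto simp: GM_def FM_def)
  \<comment> \<open>A one-sided inverse of a square matrix is two-sided, and FM * GM = I is biorthogonality.\<close>
  then have inverse: "FM * GM = 1\<^sub>m n"
    by (rule mat_mult_left_right_inverse[rotated 2]) (auto simp: GM_def FM_def)
  obtain i' j' where ij: "i = Suc i'" "j = Suc j'" "i' < n" "j' < n"
    using i j by (cases i; cases j) auto
  have "ip (G j) (F i) = (FM * GM) $$ (i', j')"
    using ij F[OF i] unfolding FM_def GM_def
    by (simp add: scalar_prod_def atLeast0LessThan ip_eq_sum mult.commute)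
  then show ?thesis
    using inverse ij by auto
qed

section \<open>Tight frames\<close>

definition tight_frame_bound :: "complex set \<Rightarrow> nat \<Rightarrow> nat \<Rightarrow> (nat \<Rightarrow> complex vec) \<Rightarrow> real \<Rightarrow> bool" where
  "tight_frame_bound K n N F A \<longleftrightarrow> (\<forall>i\<in>{1..N}. F i \<in> hspace K n) \<and> 0 < A \<and>
     (\<forall>f\<in>hspace K n. (\<Sum>i\<in>{1..N}. (cmod (ip f (F i)))\<^sup>2) = A * (vnorm f)\<^sup>2)"

lemma is_tight_frame_iff: "is_tight_frame K n N F \<longleftrightarrow> (\<exists>A. tight_frame_bound K n N F A)"
  unfolding is_tight_frame_def tight_frame_bound_def by auto

lemma tight_frame_bound_is_frame: "tight_frame_bound K n N F A \<Longrightarrow> is_frame K n N F"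
  unfolding tight_frame_bound_def is_frame_def by (intro conjI; force)

lemma hermitian_form_eq_0:
  fixes B :: "complex vec \<Rightarrow> complex vec \<Rightarrow> complex"
  assumes K: "K = \<real> \<or> K = UNIV"
    and expand: "\<And>f g. f \<in> hspace K n \<Longrightarrow> g \<in> hspace K n \<Longrightarrow>
      B (f + g) (f + g) = B f f + B g g + B f g + cnj (B f g)"
    and diag: "\<And>f. f \<in> hspace K n \<Longrightarrow> B f f = 0"
    and real: "\<And>f g. K = \<real> \<Longrightarrow> f \<in> hspace K n \<Longrightarrow> g \<in> hspace K n \<Longrightarrow> B f g \<in> \<real>"
    and imag: "\<And>f g. K = UNIV \<Longrightarrow> f \<in> hspace K n \<Longrightarrow> g \<in> hspace K n \<Longrightarrow>
      B f (\<i> \<cdot>\<^sub>v g) = - \<i> * B f g"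
    and f: "f \<in> hspace K n" and g: "g \<in> hspace K n"
  shows "B f g = 0"
proof -
  have re: "B f h + cnj (B f h) = 0" if "h \<in> hspace K n" for h
    using expand[OF f that] diag[OF f] diag[OF that] diag[OF hspace_add[OF K f that]] by simp
  from K show ?thesis
  proof
    assume "K = \<real>"
    then have "cnj (B f g) = B f g"
      using real f g by (simp add: Reals_cnj_iff)
    then show ?thesis
      using re[OF g] by simp
  next
    assume KU: "K = UNIV"
    then have "\<i> \<cdot>\<^sub>v g \<in> hspace K n"
      using g unfolding hspace_def by auto
    then have "B f (\<i> \<cdot>\<^sub>v g) + cnj (B f (\<i> \<cdot>\<^sub>v g)) = 0"
      by (rule re)
    then have "\<i> * (cnj (B f g) - B f g) = 0"
      using imag[OF KU f g] by (simp add: algebra_simps)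
    then have "cnj (B f g) = B f g"
      by simp
    then show ?thesis
      using re[OF g] by simp
  qed
qed

lemma tight_frame_polarization:
  assumes K: "K = \<real> \<or> K = UNIV" and tight: "tight_frame_bound K n N F A"
    and f: "f \<in> hspace K n" and g: "g \<in> hspace K n"
  shows "(\<Sum>i\<in>{1..N}. ip f (F i) * cnj (ip g (F i))) = of_real A * ip f g"
proof -
  have FK: "F i \<in> hspace K n" if "i \<in> {1..N}" for i
    using tight that by (simp add: tight_frame_bound_def)
  note F = hspace_carrier[OF FK]
  define B where "B u v = (\<Sum>i\<in>{1..N}. ip u (F i) * cnj (ip v (F i))) - of_real A * ip u v" for u v
  \<comment> \<open>B is the form of the operator S_F - A I; tightness says exactly that its diagonal vanishes.\<close>
  have "B f g = 0"
  proof (rule hermitian_form_eq_0[OF K _ _ _ _ f g])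
    fix u v assume u: "u \<in> hspace K n" and v: "v \<in> hspace K n"
    note uv = hspace_carrier[OF u] hspace_carrier[OF v]
    show "B (u + v) (u + v) = B u u + B v v + B u v + cnj (B u v)"
      using uv F ip_commute[OF uv(1,2)]
      by (simp add: B_def ip_add_left ip_add_right sum.distrib sum_subtractf algebra_simps)
    show "B u v \<in> \<real>" if "K = \<real>"
      using that u v FK by (auto simp: B_def intro!: ip_Reals sum_in_Reals Reals_mult Reals_diff
          simp: Reals_cnj_iff[THEN iffD1, OF ip_Reals])
    show "B u (\<i> \<cdot>\<^sub>v v) = - \<i> * B u v" if "K = UNIV"
    proof -
      have "(\<Sum>i\<in>{1..N}. ip u (F i) * cnj (ip (\<i> \<cdot>\<^sub>v v) (F i)))
          = - \<i> * (\<Sum>i\<in>{1..N}. ip u (F i) * cnj (ip v (F i)))"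
        unfolding sum_distrib_left using uv F by (intro sum.cong refl) (simp add: ip_smult_left)
      then show ?thesis
        by (simp add: B_def ip_smult_right algebra_simps)
    qed
  next
    fix u assume u: "u \<in> hspace K n"
    have "(\<Sum>i\<in>{1..N}. ip u (F i) * cnj (ip u (F i))) = of_real (\<Sum>i\<in>{1..N}. (cmod (ip u (F i)))\<^sup>2)"
      unfolding of_real_sum complex_norm_square ..
    moreover have "(\<Sum>i\<in>{1..N}. (cmod (ip u (F i)))\<^sup>2) = A * (vnorm u)\<^sup>2"
      using tight u by (simp add: tight_frame_bound_def)
    ultimately have "(\<Sum>i\<in>{1..N}. ip u (F i) * cnj (ip u (F i))) = of_real A * of_real ((vnorm u)\<^sup>2)"
      by (simp only: of_real_mult)
    then show "B u u = 0"
      unfolding B_def ip_self by simp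
  qed
  then show ?thesis
    by (simp add: B_def)
qed

lemma tight_frame_op:
  assumes K: "K = \<real> \<or> K = UNIV" and tight: "tight_frame_bound K n N F A"
    and f: "f \<in> hspace K n"
  shows "frame_op n N F f = of_real A \<cdot>\<^sub>v f"
proof (rule eq_vecI)
  fix k assume "k < dim_vec (of_real A \<cdot>\<^sub>v f)"
  then have k: "k < n"
    using hspace_dim[OF f] by simp
  have F: "F i \<in> carrier_vec n" if "i \<in> {1..N}" for i
    using tight that by (auto simp: tight_frame_bound_def intro: hspace_carrier)
  have "frame_op n N F f $ k = (\<Sum>i\<in>{1..N}. ip f (F i) * cnj (ip (unit_vec n k) (F i)))"
    using k F by (simp add: frame_op_def lincomb_index ip_unit_vec_left)
  also have "\<dots> = of_real A * ip f (unit_vec n k)"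
    by (rule tight_frame_polarization[OF K tight f unit_vec_hspace[OF K k]])
  also have "\<dots> = (of_real A \<cdot>\<^sub>v f) $ k"
    using f k by (simp add: ip_unit_vec_right hspace_carrier hspace_dim)
  finally show "frame_op n N F f $ k = (of_real A \<cdot>\<^sub>v f) $ k" .
qed (simp add: frame_op_def lincomb_def hspace_dim[OF f])

lemma canon_dual_tight:
  assumes K: "K = \<real> \<or> K = UNIV" and tight: "tight_frame_bound K n N F A"
    and i: "i \<in> {1..N}"
  shows "canon_dual K n N F i = of_real (1 / A) \<cdot>\<^sub>v F i"
proof -
  have pos: "0 < A" and Fi: "F i \<in> hspace K n"
    using tight i by (auto simp: tight_frame_bound_def)
  have inverse: "of_real (1 / A) \<cdot>\<^sub>v frame_op n N F f = f" if "f \<in> hspace K n" for f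
    using tight_frame_op[OF K tight that] pos hspace_carrier[OF that] by (simp add: smult_smult_assoc)
  have "inj_on (frame_op n N F) (hspace K n)"
    by (rule inj_onI) (metis inverse)
  moreover have "frame_op n N F (of_real (1 / A) \<cdot>\<^sub>v F i) = of_real A \<cdot>\<^sub>v (of_real (1 / A) \<cdot>\<^sub>v F i)"
    by (rule tight_frame_op[OF K tight hspace_smult_real[OF K Fi]])
  then have "frame_op n N F (of_real (1 / A) \<cdot>\<^sub>v F i) = F i"
    using pos hspace_carrier[OF Fi] by (simp add: smult_smult_assoc)
  ultimately show ?thesis
    unfolding canon_dual_def by (rule the_inv_into_f_eq) (rule hspace_smult_real[OF K Fi])
qed

lemma ip_canon_dual_tight:
  assumes K: "K = \<real> \<or> K = UNIV" and tight: "tight_frame_bound K n N F A"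
    and i: "i \<in> {1..N}"
  shows "ip (canon_dual K n N F i) (F i) = of_real ((vnorm (F i))\<^sup>2 / A)"
proof -
  have "F i \<in> carrier_vec n"
    using tight i by (auto simp: tight_frame_bound_def intro: hspace_carrier)
  then show ?thesis
    unfolding canon_dual_tight[OF K tight i] by (simp add: ip_smult_left ip_self)
qed

lemma canon_dual_pair_tight:
  assumes K: "K = \<real> \<or> K = UNIV" and tight: "tight_frame_bound K n N F A"
  shows "dual_pair K n N F (canon_dual K n N F)"
proof -
  have pos: "0 < A" and F: "\<forall>i\<in>{1..N}. F i \<in> hspace K n"
    using tight by (auto simp: tight_frame_bound_def)
  let ?c = "of_real (1 / A) :: complex"
  have canon: "canon_dual K n N F i = ?c \<cdot>\<^sub>v F i" if "i \<in> {1..N}" for i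
    using canon_dual_tight[OF K tight that] .
  have "(\<Sum>i\<in>{1..N}. (cmod (ip f (canon_dual K n N F i)))\<^sup>2) = 1 / A * (vnorm f)\<^sup>2"
    if "f \<in> hspace K n" for f
  proof -
    have "(\<Sum>i\<in>{1..N}. (cmod (ip f (canon_dual K n N F i)))\<^sup>2)
        = (1 / A)\<^sup>2 * (\<Sum>i\<in>{1..N}. (cmod (ip f (F i)))\<^sup>2)"
      using pos by (auto simp: sum_distrib_left canon ip_smult_right norm_divide power_divide
          intro!: sum.cong)
    then show ?thesis
      using tight that pos by (simp add: tight_frame_bound_def power2_eq_square)
  qed
  moreover have "canon_dual K n N F i \<in> hspace K n" if "i \<in> {1..N}" for i
    unfolding canon[OF that] using F that by (intro hspace_smult_real[OF K]) auto
  ultimately have "tight_frame_bound K n N (canon_dual K n N F) (1 / A)"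
    using pos by (simp add: tight_frame_bound_def)
  moreover have "f = lincomb n N (\<lambda>i. ip f (F i)) (canon_dual K n N F) \<and>
      f = lincomb n N (\<lambda>i. ip f (canon_dual K n N F i)) F" if f: "f \<in> hspace K n" for f
  proof -
    have "?c \<cdot>\<^sub>v frame_op n N F f = f"
      using tight_frame_op[OF K tight f] pos hspace_carrier[OF f] by (simp add: smult_smult_assoc)
    moreover have "lincomb n N (\<lambda>i. ip f (F i)) (canon_dual K n N F) = ?c \<cdot>\<^sub>v frame_op n N F f"
      unfolding frame_op_def using F
      by (subst lincomb_smult_vec[symmetric]) (auto intro!: lincomb_cong intro: hspace_carrier simp: canon)
    moreover have "lincomb n N (\<lambda>i. ip f (canon_dual K n N F i)) F = ?c \<cdot>\<^sub>v frame_op n N F f"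
      unfolding frame_op_def lincomb_smult_coeff[symmetric]
      by (rule lincomb_cong) (simp_all add: canon ip_smult_right)
    ultimately show ?thesis
      by simp
  qed
  ultimately show ?thesis
    unfolding dual_pair_def is_dual_def using tight_frame_bound_is_frame tight by blast
qed

lemma tight_frame_vnorm_le:
  assumes tight: "tight_frame_bound K n N F A" and i: "i \<in> {1..N}"
  shows "(vnorm (F i))\<^sup>2 \<le> A"
proof -
  have Fi: "F i \<in> hspace K n" and pos: "0 < A"
    using tight i by (auto simp: tight_frame_bound_def)
  have "((vnorm (F i))\<^sup>2)\<^sup>2 = (cmod (ip (F i) (F i)))\<^sup>2"
    unfolding ip_self norm_of_real by simp
  also have "\<dots> \<le> (\<Sum>j\<in>{1..N}. (cmod (ip (F i) (F j)))\<^sup>2)"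
    using i by (intro member_le_sum) auto
  also have "\<dots> = A * (vnorm (F i))\<^sup>2"
    using tight Fi by (simp add: tight_frame_bound_def)
  finally have le: "(vnorm (F i))\<^sup>2 * (vnorm (F i))\<^sup>2 \<le> A * (vnorm (F i))\<^sup>2"
    by (simp add: power2_eq_square)
  show ?thesis
  proof (rule ccontr)
    assume "\<not> (vnorm (F i))\<^sup>2 \<le> A"
    then have "A * (vnorm (F i))\<^sup>2 < (vnorm (F i))\<^sup>2 * (vnorm (F i))\<^sup>2"
      using pos by (intro mult_strict_right_mono) auto
    then show False
      using le by simp
  qed
qed

lemma tight_frame_length_ge:
  assumes K: "K = \<real> \<or> K = UNIV" and tight: "tight_frame_bound K n N F A"
  shows "n \<le> N"
proof -
  have pos: "0 < A"
    using tight by (simp add: tight_frame_bound_def)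
  have "real n \<le> (\<Sum>i\<in>{1..N}. cmod (ip (canon_dual K n N F i) (F i)))"
    by (rule dual_pair_trace_le[OF K canon_dual_pair_tight[OF K tight]])
  also have "\<dots> \<le> (\<Sum>i\<in>{1..N}. 1)"
  proof (rule sum_mono)
    fix i assume i: "i \<in> {1..N}"
    have "(vnorm (F i))\<^sup>2 / A \<le> 1"
      using tight_frame_vnorm_le[OF tight i] pos by simp
    then show "cmod (ip (canon_dual K n N F i) (F i)) \<le> 1"
      unfolding ip_canon_dual_tight[OF K tight i] norm_of_real using pos by simp
  qed
  finally show ?thesis
    by simp
qed

lemma square_tight_dual_unique:
  assumes K: "K = \<real> \<or> K = UNIV" and tight: "tight_frame_bound K n n F A"
    and dual: "is_dual K n n F G" and j: "j \<in> {1..n}"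
  shows "G j = canon_dual K n n F j"
proof -
  have pos: "0 < A" and F: "\<And>i. i \<in> {1..n} \<Longrightarrow> F i \<in> carrier_vec n"
    using tight by (auto simp: tight_frame_bound_def intro: hspace_carrier)
  have GK: "\<forall>i\<in>{1..n}. G i \<in> hspace K n"
    using dual by (simp add: is_dual_def is_frame_def)
  then have G: "G j \<in> carrier_vec n"
    using hspace_carrier j by blast
  have "frame_op n n F (G j) = F j"
    unfolding frame_op_def lincomb_def
    using square_dual_biorthogonal[OF K dual F _ j] j F[OF j]
    by (intro eq_vecI) (auto simp: if_distrib[of "\<lambda>x. x * _"] cong: if_cong)
  then have "of_real A \<cdot>\<^sub>v G j = F j"
    using tight_frame_op[OF K tight] GK j by simp
  moreover have "G j = of_real (1 / A) \<cdot>\<^sub>v (of_real A \<cdot>\<^sub>v G j)"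
    using pos G by (simp add: smult_smult_assoc)
  ultimately show ?thesis
    using canon_dual_tight[OF K tight j] by simp
qed

lemma square_tight_frame_vnorm:
  assumes K: "K = \<real> \<or> K = UNIV" and tight: "tight_frame_bound K n n F A"
    and i: "i \<in> {1..n}"
  shows "(vnorm (F i))\<^sup>2 = A"
proof -
  have pos: "0 < A"
    using tight by (simp add: tight_frame_bound_def)
  have F: "\<And>j. j \<in> {1..n} \<Longrightarrow> F j \<in> carrier_vec n"
    using tight by (auto simp: tight_frame_bound_def intro: hspace_carrier)
  have "ip (canon_dual K n n F i) (F i) = 1"
    using square_dual_biorthogonal[where F = F and G = "canon_dual K n n F", OF K _ F i i]
      canon_dual_pair_tight[OF K tight]
    by (simp add: dual_pair_def)
  then show ?thesis
    using pos unfolding ip_canon_dual_tight[OF K tight i] of_real_eq_1_iff by simp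
qed

section \<open>Parseval frames with prescribed norms\<close>

definition outer_sum :: "complex vec list \<Rightarrow> nat \<Rightarrow> nat \<Rightarrow> complex" where
  "outer_sum hs r s = (\<Sum>h\<leftarrow>hs. h $ r * cnj (h $ s))"

text \<open>hs are real vectors with squared norms ws whose outer products \<open>h h\<^sup>*\<close> sum to the
  orthogonal projection of \<open>\<real>\<^sup>d\<close> onto its first m coordinates.\<close>

definition is_proj_frame :: "nat \<Rightarrow> nat \<Rightarrow> real list \<Rightarrow> complex vec list \<Rightarrow> bool" where
  "is_proj_frame d m ws hs \<longleftrightarrow>
     list_all2 (\<lambda>h w. h \<in> hspace \<real> d \<and> (vnorm h)\<^sup>2 = w) hs ws \<and>
     (\<forall>r<d. \<forall>s<d. outer_sum hs r s = (if r = s \<and> r < m then 1 else 0))"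

lemma outer_sum_Nil [simp]: "outer_sum [] r s = 0"
  by (simp add: outer_sum_def)

lemma outer_sum_Cons [simp]: "outer_sum (h # hs) r s = h $ r * cnj (h $ s) + outer_sum hs r s"
  by (simp add: outer_sum_def)

lemma outer_sum_diag: "outer_sum hs r r = of_real (\<Sum>h\<leftarrow>hs. (cmod (h $ r))\<^sup>2)"
  by (induct hs) (simp_all add: complex_norm_square[symmetric] del: of_real_power)

lemma proj_frame_entry_eq_0:
  assumes frame: "is_proj_frame d m ws (u # hs)" and k: "m \<le> k" "k < d"
  shows "u $ k = 0"
proof -
  have "of_real ((cmod (u $ k))\<^sup>2 + (\<Sum>h\<leftarrow>hs. (cmod (h $ k))\<^sup>2)) = outer_sum (u # hs) k k"
    using outer_sum_diag[of "u # hs" k] by simp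
  also have "\<dots> = 0"
    using frame k by (simp add: is_proj_frame_def)
  finally have "(cmod (u $ k))\<^sup>2 + (\<Sum>h\<leftarrow>hs. (cmod (h $ k))\<^sup>2) = 0"
    by (simp only: of_real_eq_0_iff)
  moreover have "0 \<le> (\<Sum>h\<leftarrow>hs. (cmod (h $ k))\<^sup>2)"
    by (rule sum_list_nonneg) auto
  ultimately have "(cmod (u $ k))\<^sup>2 = 0"
    using zero_le_power2[of "cmod (u $ k)"] by linarith
  then show ?thesis
    by simp
qed

lemma rotation_outer_entry:
  fixes c s :: real and x y x' y' :: complex
  assumes "c\<^sup>2 + s\<^sup>2 = 1"
  shows "(c * x + s * y) * cnj (c * x' + s * y') + (s * x - c * y) * cnj (s * x' - c * y')
    = x * cnj x' + y * cnj y'"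
proof -
  have "complex_of_real (c\<^sup>2 + s\<^sup>2) = 1"
    using assms by simp
  then have cs: "of_real c * of_real c + of_real s * of_real s = (1 :: complex)"
    by (simp add: power2_eq_square)
  have "(c * x + s * y) * cnj (c * x' + s * y') + (s * x - c * y) * cnj (s * x' - c * y')
    = (of_real c * of_real c + of_real s * of_real s) * (x * cnj x' + y * cnj y')"
    by (simp add: algebra_simps)
  then show ?thesis
    unfolding cs by simp
qed

lemma vnorm_add_unit_vec:
  assumes u: "u \<in> carrier_vec d" and k: "k < d" and uk: "u $ k = 0"
  shows "(vnorm (of_real a \<cdot>\<^sub>v u + of_real b \<cdot>\<^sub>v unit_vec d k))\<^sup>2 = a\<^sup>2 * (vnorm u)\<^sup>2 + b\<^sup>2"
proof -
  let ?x = "of_real a \<cdot>\<^sub>v u + of_real b \<cdot>\<^sub>v unit_vec d k"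
  have "(cmod (?x $ r))\<^sup>2 = a\<^sup>2 * (cmod (u $ r))\<^sup>2 + (if r = k then b\<^sup>2 else 0)" if "r < d" for r
    using u that uk k by (cases "r = k") (simp_all add: norm_mult power_mult_distrib)
  then have "(vnorm ?x)\<^sup>2 = (\<Sum>r<d. a\<^sup>2 * (cmod (u $ r))\<^sup>2 + (if r = k then b\<^sup>2 else 0))"
    using u unfolding vnorm_power2 by (intro sum.cong) auto
  also have "\<dots> = a\<^sup>2 * (vnorm u)\<^sup>2 + b\<^sup>2"
    using u k by (simp add: sum.distrib sum_distrib_left vnorm_power2)
  finally show ?thesis .
qed

lemma split_weights:
  fixes w1 w2 :: real
  assumes "0 \<le> w1" "0 \<le> w2"
  obtains c s where "c\<^sup>2 + s\<^sup>2 = 1" "c\<^sup>2 * (w1 + w2) = w1" "s\<^sup>2 * (w1 + w2) = w2"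
proof (cases "w1 + w2 = 0")
  case True
  then show ?thesis
    using that[of 1 0] assms by simp
next
  case False
  then have "0 < w1 + w2"
    using assms by simp
  then show ?thesis
    using that[of "sqrt (w1 / (w1 + w2))" "sqrt (w2 / (w1 + w2))"] assms
    by (simp add: add_divide_distrib[symmetric])
qed

lemma rotation_weights:
  fixes w1 w2 :: real
  assumes w1: "0 \<le> w1" "w1 \<le> 1" and w2: "0 \<le> w2" "w2 \<le> 1" and sum: "1 \<le> w1 + w2"
  obtains c s where "c\<^sup>2 + s\<^sup>2 = 1" "c\<^sup>2 * (w1 + w2 - 1) + s\<^sup>2 = w1" "s\<^sup>2 * (w1 + w2 - 1) + c\<^sup>2 = w2"
proof (cases "w1 + w2 = 2")
  case True
  then show ?thesis
    using that[of 1 0] w1 w2 by simp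
next
  case False
  define \<gamma> where "\<gamma> = (1 - w1) / (2 - w1 - w2)"
  have "2 - w1 - w2 > 0"
    using False w1 w2 by simp
  then have \<gamma>: "0 \<le> \<gamma>" "\<gamma> \<le> 1" "\<gamma> * (2 - w1 - w2) = 1 - w1"
    using w1 w2 by (simp_all add: \<gamma>_def field_simps)
  show ?thesis
  proof (rule that[of "sqrt \<gamma>" "sqrt (1 - \<gamma>)"])
    show "(sqrt \<gamma>)\<^sup>2 * (w1 + w2 - 1) + (sqrt (1 - \<gamma>))\<^sup>2 = w1"
      using \<gamma> by (simp add: algebra_simps)
    show "(sqrt (1 - \<gamma>))\<^sup>2 * (w1 + w2 - 1) + (sqrt \<gamma>)\<^sup>2 = w2"
      using \<gamma> by (simp add: algebra_simps)
  qed (use \<gamma> in simp)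
qed

lemma proj_frame_split:
  assumes frame: "is_proj_frame d m ((w1 + w2) # ws) hs" and w: "0 \<le> w1" "0 \<le> w2"
  shows "\<exists>hs'. is_proj_frame d m (w1 # w2 # ws) hs'"
proof -
  obtain u hs0 where hs: "hs = u # hs0" and u: "u \<in> hspace \<real> d" "(vnorm u)\<^sup>2 = w1 + w2"
    using frame by (auto simp: is_proj_frame_def list_all2_Cons2)
  obtain c s where cs: "c\<^sup>2 + s\<^sup>2 = 1" "c\<^sup>2 * (w1 + w2) = w1" "s\<^sup>2 * (w1 + w2) = w2"
    using split_weights[OF w] .
  let ?h1 = "of_real c \<cdot>\<^sub>v u" and ?h2 = "of_real s \<cdot>\<^sub>v u"
  have "?h1 $ r * cnj (?h1 $ t) + ?h2 $ r * cnj (?h2 $ t) = u $ r * cnj (u $ t)" if "r < d" "t < d" for r t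
    using rotation_outer_entry[OF cs(1), of "u $ r" 0 "u $ t" 0] that hspace_carrier[OF u(1)] by simp
  then have "is_proj_frame d m (w1 # w2 # ws) (?h1 # ?h2 # hs0)"
    using frame u cs hspace_smult_real[of "\<real>", OF _ u(1)]
    by (simp add: is_proj_frame_def hs vnorm_smult power_mult_distrib add.assoc[symmetric])
  then show ?thesis ..
qed

lemma proj_frame_rotate:
  assumes frame: "is_proj_frame d m ((w1 + w2 - 1) # ws) hs" and m: "m < d"
    and w1: "0 \<le> w1" "w1 \<le> 1" and w2: "0 \<le> w2" "w2 \<le> 1" and sum: "1 \<le> w1 + w2"
  shows "\<exists>hs'. is_proj_frame d (Suc m) (w1 # w2 # ws) hs'"
proof -
  obtain u hs0 where hs: "hs = u # hs0" and u: "u \<in> hspace \<real> d" "(vnorm u)\<^sup>2 = w1 + w2 - 1"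
    using frame by (auto simp: is_proj_frame_def list_all2_Cons2)
  have um: "u $ m = 0"
    using proj_frame_entry_eq_0[OF frame[unfolded hs] order.refl m] .
  obtain c s where cs: "c\<^sup>2 + s\<^sup>2 = 1" "c\<^sup>2 * (w1 + w2 - 1) + s\<^sup>2 = w1" "s\<^sup>2 * (w1 + w2 - 1) + c\<^sup>2 = w2"
    using rotation_weights[OF w1 w2 sum] .
  let ?e = "unit_vec d m"
  let ?h1 = "of_real c \<cdot>\<^sub>v u + of_real s \<cdot>\<^sub>v ?e" and ?h2 = "of_real s \<cdot>\<^sub>v u + of_real (- c) \<cdot>\<^sub>v ?e"
  \<comment> \<open>Rotating the pair (u, e_m) keeps their joint outer-product sum and adds e_m e_m* to the projection.\<close>
  have outer: "outer_sum (?h1 # ?h2 # hs0) r t = outer_sum (u # hs0) r t + ?e $ r * cnj (?e $ t)"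
    if "r < d" "t < d" for r t
    using rotation_outer_entry[OF cs(1), of "u $ r" "?e $ r" "u $ t" "?e $ t"] that hspace_carrier[OF u(1)]
    by (simp add: algebra_simps)
  have "outer_sum (?h1 # ?h2 # hs0) r t = (if r = t \<and> r < Suc m then 1 else 0)"
    if "r < d" "t < d" for r t
    unfolding outer[OF that] using frame that by (auto simp: is_proj_frame_def hs unit_vec_def)
  moreover have "?h1 \<in> hspace \<real> d" "?h2 \<in> hspace \<real> d"
    using u(1) m by (auto intro!: hspace_add hspace_smult_real unit_vec_hspace simp del: of_real_minus)
  moreover have "(vnorm ?h1)\<^sup>2 = w1"
    using vnorm_add_unit_vec[OF hspace_carrier[OF u(1)] m um, of c s] u cs by simp
  moreover have "(vnorm ?h2)\<^sup>2 = w2"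
    using vnorm_add_unit_vec[OF hspace_carrier[OF u(1)] m um, of s "- c"] u cs by simp
  ultimately have "is_proj_frame d (Suc m) (w1 # w2 # ws) (?h1 # ?h2 # hs0)"
    using frame by (simp add: is_proj_frame_def hs)
  then show ?thesis ..
qed

lemma proj_frame_singleton:
  assumes "0 \<le> w" "w \<le> 1" "w = real m" "m \<le> d"
  shows "\<exists>hs. is_proj_frame d m [w] hs"
proof -
  consider "m = 0" | "m = 1"
    using assms by linarith
  then show ?thesis
  proof cases
    case 1
    then have "is_proj_frame d m [w] [0\<^sub>v d]"
      using assms by (simp add: is_proj_frame_def hspace_def vnorm_power2)
    then show ?thesis ..
  next
    case 2
    then have "is_proj_frame d m [w] [unit_vec d 0]"
      using assms vnorm_unit_vec[of 0 d] by (auto simp: is_proj_frame_def hspace_def)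
    then show ?thesis ..
  qed
qed

lemma proj_frame_exists:
  assumes "\<forall>w\<in>set ws. 0 \<le> w \<and> w \<le> 1" and "sum_list ws = real m" and "m \<le> d"
  shows "\<exists>hs. is_proj_frame d m ws hs"
  using assms
proof (induction "length ws" arbitrary: ws m rule: less_induct)
  case less
  consider "ws = []" | w where "ws = [w]" | w1 w2 rest where "ws = w1 # w2 # rest"
    by (metis list.exhaust)
  then show ?case
  proof cases
    case 1
    then have "is_proj_frame d m ws []"
      using less.prems by (simp add: is_proj_frame_def)
    then show ?thesis ..
  next
    case (2 w)
    then show ?thesis
      using proj_frame_singleton less.prems by auto
  next
    case (3 w1 w2 rest)
    have w: "0 \<le> w1" "w1 \<le> 1" "0 \<le> w2" "w2 \<le> 1" "\<forall>w\<in>set rest. 0 \<le> w \<and> w \<le> 1"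
      using 3 less.prems by auto
    show ?thesis
    proof (cases "w1 + w2 \<le> 1")
      case True
      then obtain hs where "is_proj_frame d m ((w1 + w2) # rest) hs"
        using less.hyps[of "(w1 + w2) # rest" m] less.prems w 3 by auto
      then show ?thesis
        using proj_frame_split w 3 by blast
    next
      case False
      have "0 \<le> sum_list rest"
        using w by (intro sum_list_nonneg) auto
      then obtain k where k: "m = Suc k"
        using less.prems 3 False by (cases m) auto
      then obtain hs where "is_proj_frame d k ((w1 + w2 - 1) # rest) hs"
        using less.hyps[of "(w1 + w2 - 1) # rest" k] less.prems w 3 False by auto
      then show ?thesis
        using proj_frame_rotate[of d k w1 w2 rest] k w 3 False less.prems by auto
    qed
  qed
qed

lemma parseval_frame_exists:
  fixes w :: "nat \<Rightarrow> real" and N n :: nat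
  assumes w: "\<forall>i\<in>{1..N}. 0 \<le> w i \<and> w i \<le> 1" and sum: "(\<Sum>i\<in>{1..N}. w i) = real n"
  obtains H where "\<forall>i\<in>{1..N}. H i \<in> hspace \<real> n \<and> (vnorm (H i))\<^sup>2 = w i"
    and "\<forall>r<n. \<forall>s<n. (\<Sum>i\<in>{1..N}. H i $ r * cnj (H i $ s)) = (if r = s then 1 else 0)"
proof -
  let ?ws = "map w [1..<Suc N]"
  have "sum_list ?ws = (\<Sum>i\<in>{1..N}. w i)"
    by (simp only: sum_list_distinct_conv_sum_set[OF distinct_upt] set_upt
        atLeastLessThanSuc_atLeastAtMost)
  then have "sum_list ?ws = real n"
    using sum by simp
  moreover have "\<forall>x\<in>set ?ws. 0 \<le> x \<and> x \<le> 1"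
    using w by auto
  ultimately obtain hs where hs: "is_proj_frame n n ?ws hs"
    using proj_frame_exists[of ?ws n n] by blast
  then have len: "length hs = N" and all: "list_all2 (\<lambda>h w. h \<in> hspace \<real> n \<and> (vnorm h)\<^sup>2 = w) hs ?ws"
    by (auto simp: is_proj_frame_def dest: list_all2_lengthD)
  define H where "H i = hs ! (i - 1)" for i
  show ?thesis
  proof (rule that)
    have "?ws ! (i - 1) = w i" if "i \<in> {1..N}" for i
      using that by (subst nth_map) (auto simp del: upt_Suc)
    then show "\<forall>i\<in>{1..N}. H i \<in> hspace \<real> n \<and> (vnorm (H i))\<^sup>2 = w i"
      using list_all2_nthD[OF all] len by (auto simp: H_def simp del: upt_Suc)
    have "(\<Sum>i\<in>{1..N}. H i $ r * cnj (H i $ s)) = outer_sum hs r s" for r s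
      by (simp add: H_def outer_sum_def sum_list_sum_nth len sum.atLeast1_atMost_eq atLeast0LessThan)
    then show "\<forall>r<n. \<forall>s<n. (\<Sum>i\<in>{1..N}. H i $ r * cnj (H i $ s)) = (if r = s then 1 else 0)"
      using hs by (simp add: is_proj_frame_def)
  qed
qed

lemma parseval_reconstruction:
  assumes H: "\<And>i. i \<in> {1..N} \<Longrightarrow> H i \<in> carrier_vec n"
    and parseval: "\<forall>r<n. \<forall>s<n. (\<Sum>i\<in>{1..N}. H i $ r * cnj (H i $ s)) = (if r = s then 1 else 0)"
    and f: "f \<in> carrier_vec n"
  shows "lincomb n N (\<lambda>i. ip f (H i)) H = f"
proof (rule eq_vecI)
  fix r assume "r < dim_vec f"
  then have r: "r < n"
    using f by simp
  have "ip f (H i) * H i $ r = (\<Sum>s<n. f $ s * (H i $ r * cnj (H i $ s)))" if "i \<in> {1..N}" for i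
    using H[OF that] by (simp add: ip_eq_sum sum_distrib_left sum_distrib_right ac_simps)
  then have "lincomb n N (\<lambda>i. ip f (H i)) H $ r = (\<Sum>i\<in>{1..N}. \<Sum>s<n. f $ s * (H i $ r * cnj (H i $ s)))"
    using r by (auto simp: lincomb_index intro!: sum.cong)
  also have "\<dots> = (\<Sum>s<n. f $ s * (\<Sum>i\<in>{1..N}. H i $ r * cnj (H i $ s)))"
    by (subst sum.swap) (simp add: sum_distrib_left)
  also have "\<dots> = f $ r"
    using parseval r by (simp add: if_distrib[of "\<lambda>x. f $ _ * x"] cong: if_cong)
  finally show "lincomb n N (\<lambda>i. ip f (H i)) H $ r = f $ r" .
qed (use f in \<open>simp add: lincomb_def\<close>)

lemma parseval_dual_pair:
  assumes K: "K = \<real> \<or> K = UNIV" and HK: "\<forall>i\<in>{1..N}. H i \<in> hspace K n"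
    and parseval: "\<forall>r<n. \<forall>s<n. (\<Sum>i\<in>{1..N}. H i $ r * cnj (H i $ s)) = (if r = s then 1 else 0)"
  shows "dual_pair K n N H H"
proof -
  have H: "H i \<in> carrier_vec n" if "i \<in> {1..N}" for i
    using HK that by (auto intro: hspace_carrier)
  have recon: "lincomb n N (\<lambda>i. ip f (H i)) H = f" if "f \<in> carrier_vec n" for f
    by (rule parseval_reconstruction) (use H parseval that in auto)
  have "(\<Sum>i\<in>{1..N}. (cmod (ip f (H i)))\<^sup>2) = (vnorm f)\<^sup>2" if f: "f \<in> carrier_vec n" for f
  proof -
    have "of_real (\<Sum>i\<in>{1..N}. (cmod (ip f (H i)))\<^sup>2) = (\<Sum>i\<in>{1..N}. ip f (H i) * ip (H i) f)"
      unfolding of_real_sum complex_norm_square using f H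
      by (intro sum.cong refl) (simp add: ip_commute[OF f])
    also have "\<dots> = ip (lincomb n N (\<lambda>i. ip f (H i)) H) f"
      by (rule ip_lincomb_left[symmetric]) (use f H in auto)
    also have "\<dots> = ip f f"
      using recon[OF f] by simp
    finally show ?thesis
      unfolding ip_self of_real_eq_iff .
  qed
  then have "is_frame K n N H"
    using HK unfolding is_frame_def by (auto intro!: exI[of _ 1] dest: hspace_carrier)
  then show ?thesis
    using recon hspace_carrier unfolding dual_pair_def is_dual_def by auto
qed

section \<open>Erasure errors\<close>

lemma singleton_subsets_image: "{f L | L. L \<subseteq> S \<and> card L = 1} = (\<lambda>i. f {i}) ` S"
  by (auto simp: card_1_singleton_iff)

lemma exists_ge_1_if_weighted_sum_ge:
  fixes c r :: "'a \<Rightarrow> real"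
  assumes "finite S" "S \<noteq> {}" "\<forall>i\<in>S. 0 < c i" "(\<Sum>i\<in>S. c i) \<le> (\<Sum>i\<in>S. c i * r i)"
  shows "\<exists>i\<in>S. 1 \<le> r i"
proof (rule ccontr)
  assume "\<not> (\<exists>i\<in>S. 1 \<le> r i)"
  then have "c i * r i < c i" if "i \<in> S" for i
    using that assms(3) mult_strict_left_mono[of "r i" 1 "c i"] by (simp add: not_le)
  then have "(\<Sum>i\<in>S. c i * r i) < (\<Sum>i\<in>S. c i)"
    using assms(1,2) by (rule sum_strict_mono[rotated 2])
  then show False
    using assms by simp
qed

lemma all_eq_1_if_weighted_sum_ge:
  fixes c r :: "'a \<Rightarrow> real"
  assumes fin: "finite S" and c: "\<forall>i\<in>S. 0 < c i" and mean: "(\<Sum>i\<in>S. c i) \<le> (\<Sum>i\<in>S. c i * r i)"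
    and le: "\<forall>i\<in>S. r i \<le> 1"
  shows "\<forall>i\<in>S. r i = 1"
proof -
  have nonneg: "0 \<le> c i * (1 - r i)" if "i \<in> S" for i
    using c le that by (simp add: less_imp_le)
  moreover have "(\<Sum>i\<in>S. c i * (1 - r i)) \<le> 0"
    using mean by (simp add: right_diff_distrib sum_subtractf)
  moreover have "0 \<le> (\<Sum>i\<in>S. c i * (1 - r i))"
    by (intro sum_nonneg nonneg)
  ultimately have "(\<Sum>i\<in>S. c i * (1 - r i)) = 0"
    by linarith
  then have "\<forall>i\<in>S. c i * (1 - r i) = 0"
    by (subst (asm) sum_nonneg_eq_0_iff[OF fin]) (use nonneg in auto)
  show ?thesis
  proof
    fix i assume i: "i \<in> S"
    then show "r i = 1"
      using bspec[OF \<open>\<forall>i\<in>S. c i * (1 - r i) = 0\<close> i] bspec[OF c i] by simp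
  qed
qed

text \<open>Applied with a i and r i the norm and spectral radius of the i-th single-erasure error
  operator and \<open>c i = 1/q\<^sub>i\<close>; the mean hypothesis is then the trace identity.\<close>

lemma Max_average_bounds:
  fixes a r c :: "'a \<Rightarrow> real"
  assumes fin: "finite S" and ne: "S \<noteq> {}" and ra: "\<forall>i\<in>S. r i \<le> a i"
    and c: "\<forall>i\<in>S. 0 < c i" and mean: "(\<Sum>i\<in>S. c i) \<le> (\<Sum>i\<in>S. c i * r i)"
  shows "1 \<le> Max ((\<lambda>i. (a i + r i) / 2) ` S)"
    and "Max ((\<lambda>i. (a i + r i) / 2) ` S) \<le> Max (a ` S)"
    and "Max (a ` S) = 1 \<longleftrightarrow> Max ((\<lambda>i. (a i + r i) / 2) ` S) = 1"
proof -
  let ?m = "\<lambda>i. (a i + r i) / 2"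
  define Ma where "Ma = Max (a ` S)"
  define Mm where "Mm = Max (?m ` S)"
  have "?m i \<le> Mm" if "i \<in> S" for i
    unfolding Mm_def by (rule Max_ge) (use fin that in auto)
  then have m_ge: "a i + r i \<le> 2 * Mm" if "i \<in> S" for i
    using that by (simp add: mult.commute)
  have a_ge: "a i \<le> Ma" if "i \<in> S" for i
    unfolding Ma_def by (rule Max_ge) (use fin that in auto)
  obtain i where i: "i \<in> S" "1 \<le> r i"
    using exists_ge_1_if_weighted_sum_ge[OF fin ne c mean] by blast
  have ge: "1 \<le> Mm"
    using m_ge[OF i(1)] i(2) bspec[OF ra i(1)] by linarith
  have "?m i \<le> Ma" if "i \<in> S" for i
    using a_ge[OF that] bspec[OF ra that] by simp
  then have le: "Mm \<le> Ma"
    unfolding Mm_def using fin ne by (simp add: Max_le_iff)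
  have "Ma = 1 \<longleftrightarrow> Mm = 1"
  proof
    assume "Ma = 1"
    then show "Mm = 1"
      using ge le by linarith
  next
    assume m: "Mm = 1"
    have "r i \<le> 1" if "i \<in> S" for i
      using m_ge[OF that] m bspec[OF ra that] by linarith
    then have r1: "\<forall>i\<in>S. r i = 1"
      using all_eq_1_if_weighted_sum_ge[OF fin c mean] by blast
    have "a i \<le> 1" if "i \<in> S" for i
      using m_ge[OF that] m bspec[OF r1 that] by linarith
    then have "Ma \<le> 1"
      unfolding Ma_def using fin ne by (simp add: Max_le_iff)
    then show "Ma = 1"
      using ge le m by linarith
  qed
  with ge le show "1 \<le> Max (?m ` S)" "Max (?m ` S) \<le> Max (a ` S)" "Max (a ` S) = 1 \<longleftrightarrow> Max (?m ` S) = 1"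
    unfolding Ma_def Mm_def by simp_all
qed

lemma Inf_eq_attained_lower_bound:
  fixes e :: "'a \<Rightarrow> 'b \<Rightarrow> real"
  assumes attained: "P x0 y0" "e x0 y0 = m" and lower: "\<And>x y. P x y \<Longrightarrow> m \<le> e x y"
  shows "Inf {e x y | x y. P x y} = m"
proof (rule cInf_eq_minimum)
  have "m = e x0 y0 \<and> P x0 y0"
    using attained by simp
  then show "m \<in> {e x y | x y. P x y}"
    by blast
next
  fix z assume "z \<in> {e x y | x y. P x y}"
  then obtain x y where "z = e x y" "P x y"
    by blast
  then show "m \<le> z"
    using lower by simp
qed

locale erasure_setting =
  fixes K :: "complex set" and n N :: nat and p :: "nat \<Rightarrow> real"
  assumes scalars: "K = \<real> \<or> K = UNIV" and dim: "1 \<le> n"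
    and prob: "prob_seq N p" and p_less_1: "\<forall>i\<in>{1..N}. p i < 1"
begin

abbreviation q :: "nat \<Rightarrow> real" where
  "q \<equiv> weight n N p"

lemma N_ge_2: "2 \<le> N"
proof (rule ccontr)
  assume "\<not> 2 \<le> N"
  then have "N = 0 \<or> N = 1"
    by auto
  then show False
    using prob p_less_1 by (auto simp: prob_seq_def)
qed

lemma weight_eq: "i \<in> {1..N} \<Longrightarrow> q i = (real N - 1) / ((1 - p i) * real n)"
  using prob by (simp add: weight_def prob_seq_def)

lemma weight_pos: "i \<in> {1..N} \<Longrightarrow> 0 < q i"
  using N_ge_2 dim p_less_1 by (simp add: weight_eq)

lemma sum_inverse_weight: "(\<Sum>i\<in>{1..N}. 1 / q i) = real n"
proof -
  have "(\<Sum>i\<in>{1..N}. 1 / q i) = (\<Sum>i\<in>{1..N}. 1 - p i) * (real n / (real N - 1))"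
    unfolding sum_distrib_right using N_ge_2 dim by (intro sum.cong) (auto simp: weight_eq)
  also have "(\<Sum>i\<in>{1..N}. 1 - p i) = real N - 1"
    using prob by (simp add: prob_seq_def sum_subtractf)
  finally show ?thesis
    using N_ge_2 by simp
qed

lemma inverse_weight_le_1:
  assumes "n < N" and i: "i \<in> {1..N}"
  shows "1 / q i \<le> 1"
proof -
  have "0 \<le> p i" "p i \<le> 1"
    using prob i by (auto simp: prob_seq_def)
  then have "(1 - p i) * real n \<le> real n"
    by (simp add: mult_left_le_one_le)
  moreover have "real (Suc n) \<le> real N"
    using assms(1) by (simp only: of_nat_le_iff Suc_le_eq)
  ultimately have "(1 - p i) * real n \<le> real N - 1"
    by simp
  then show ?thesis
    using weight_pos[OF i] weight_eq[OF i] N_ge_2 by (simp add: field_simps)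
qed

lemma opnorm_err_op_singleton:
  assumes pair: "dual_pair K n N F G" and i: "i \<in> {1..N}"
  shows "opnorm K n (err_op n N p F G {i}) = q i * vnorm (G i) * vnorm (F i)"
proof -
  have F: "F i \<in> hspace K n" and G: "G i \<in> carrier_vec n"
    using dual_pair_hspace[OF pair i] hspace_carrier by auto
  have "opnorm K n (err_op n N p F G {i}) = vnorm (of_real (q i) \<cdot>\<^sub>v G i) * vnorm (F i)"
    unfolding err_op_singleton[of G i n N p F, OF G]
    by (rule opnorm_rank_one[OF scalars dim F]) (use G in simp)
  then show ?thesis
    using weight_pos[OF i] by (simp add: vnorm_smult)
qed

lemma spectral_radius_err_op_singleton:
  assumes pair: "dual_pair K n N F G" and i: "i \<in> {1..N}"
  shows "spectral_radius (err_op n N p F G {i}) = q i * cmod (ip (G i) (F i))"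
proof -
  have F: "F i \<in> carrier_vec n" and G: "G i \<in> carrier_vec n"
    using dual_pair_hspace[OF pair i] hspace_carrier by auto
  have "spectral_radius (err_op n N p F G {i}) = cmod (ip (of_real (q i) \<cdot>\<^sub>v G i) (F i))"
    unfolding err_op_singleton[of G i n N p F, OF G]
    by (rule spectral_radius_rank_one[OF dim F]) (use G in simp)
  then show ?thesis
    using weight_pos[OF i] F G by (simp add: ip_smult_left norm_mult)
qed

lemma O1_dual_pair:
  assumes pair: "dual_pair K n N F G"
  shows "O1 K n N p F G = Max ((\<lambda>i. q i * vnorm (G i) * vnorm (F i)) ` {1..N})"
  unfolding O1_def singleton_subsets_image[of "\<lambda>L. opnorm K n (err_op n N p F G L)"]
  by (intro arg_cong[where f = Max] image_cong) (simp_all add: opnorm_err_op_singleton[OF pair])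

lemma A1_dual_pair:
  assumes pair: "dual_pair K n N F G"
  shows "A1 K n N p F G
    = Max ((\<lambda>i. (q i * vnorm (G i) * vnorm (F i) + q i * cmod (ip (G i) (F i))) / 2) ` {1..N})"
  unfolding A1_def singleton_subsets_image[of "\<lambda>L. (opnorm K n (err_op n N p F G L)
      + spectral_radius (err_op n N p F G L)) / 2"]
  by (intro arg_cong[where f = Max] image_cong)
    (simp_all add: opnorm_err_op_singleton[OF pair] spectral_radius_err_op_singleton[OF pair])

lemma dual_pair_radius_le_norm:
  assumes pair: "dual_pair K n N F G" and i: "i \<in> {1..N}"
  shows "q i * cmod (ip (G i) (F i)) \<le> q i * vnorm (G i) * vnorm (F i)"
proof -
  have "dim_vec (G i) = dim_vec (F i)"
    using dual_pair_hspace[OF pair i] hspace_dim by metis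
  then show ?thesis
    using cmod_ip_le[of "G i" "F i"] weight_pos[OF i] by (simp add: mult.assoc)
qed

lemma dual_pair_error_bounds:
  assumes pair: "dual_pair K n N F G"
  shows "1 \<le> A1 K n N p F G" and "A1 K n N p F G \<le> O1 K n N p F G"
    and "O1 K n N p F G = 1 \<longleftrightarrow> A1 K n N p F G = 1"
proof -
  have "(\<Sum>i\<in>{1..N}. 1 / q i * (q i * cmod (ip (G i) (F i)))) = (\<Sum>i\<in>{1..N}. cmod (ip (G i) (F i)))"
    using weight_pos by (intro sum.cong) (auto simp: less_imp_neq[THEN not_sym])
  then have "(\<Sum>i\<in>{1..N}. 1 / q i) \<le> (\<Sum>i\<in>{1..N}. 1 / q i * (q i * cmod (ip (G i) (F i))))"
    using dual_pair_trace_le[OF scalars pair] sum_inverse_weight by simp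
  note bounds = Max_average_bounds[OF _ _ _ _ this]
  have "finite {1..N}" "{1..N} \<noteq> {}"
    using N_ge_2 by auto
  note bounds = bounds[OF this _ _, of "\<lambda>i. q i * vnorm (G i) * vnorm (F i)"]
  show "1 \<le> A1 K n N p F G" "A1 K n N p F G \<le> O1 K n N p F G"
    "O1 K n N p F G = 1 \<longleftrightarrow> A1 K n N p F G = 1"
    unfolding O1_dual_pair[OF pair] A1_dual_pair[OF pair]
    using bounds dual_pair_radius_le_norm[OF pair] weight_pos by auto
qed

lemma redundant_parseval_pair:
  assumes "n < N"
  obtains H where "dual_pair K n N H H" "O1 K n N p H H = 1" "A1 K n N p H H = 1"
proof -
  \<comment> \<open>The squared norms 1 / q i make every single-erasure error operator of (H, H) have norm 1.\<close>
  obtain H where H: "\<forall>i\<in>{1..N}. H i \<in> hspace \<real> n \<and> (vnorm (H i))\<^sup>2 = 1 / q i"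
    and parseval: "\<forall>r<n. \<forall>s<n. (\<Sum>i\<in>{1..N}. H i $ r * cnj (H i $ s)) = (if r = s then 1 else 0)"
    using parseval_frame_exists[of N "\<lambda>i. 1 / q i" n] inverse_weight_le_1[OF assms] weight_pos
      sum_inverse_weight by (auto simp: less_imp_le)
  have pair: "dual_pair K n N H H"
    using parseval_dual_pair[OF scalars _ parseval] H hspace_real_subset[OF scalars] by auto
  have "q i * vnorm (H i) * vnorm (H i) = 1" if "i \<in> {1..N}" for i
  proof -
    have "vnorm (H i) * vnorm (H i) = 1 / q i"
      using H that by (simp add: power2_eq_square)
    then show ?thesis
      using weight_pos[OF that] by (simp add: mult.assoc)
  qed
  then have "O1 K n N p H H \<le> 1"
    unfolding O1_dual_pair[OF pair] using N_ge_2 by (auto simp: Max_le_iff)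
  then have "O1 K n N p H H = 1" "A1 K n N p H H = 1"
    using dual_pair_error_bounds[OF pair] by linarith+
  then show ?thesis
    using that pair by blast
qed

lemma redundant_optimal_errors:
  assumes "n < N"
  shows "O1_opt K n N p = 1" and "A1_opt K n N p = 1"
proof -
  obtain H where H: "dual_pair K n N H H" "O1 K n N p H H = 1" "A1 K n N p H H = 1"
    using redundant_parseval_pair[OF assms] .
  have "1 \<le> A1 K n N p F G" "1 \<le> O1 K n N p F G" if "dual_pair K n N F G" for F G
    using dual_pair_error_bounds(1,2)[OF that] by linarith+
  then show "O1_opt K n N p = 1" "A1_opt K n N p = 1"
    unfolding O1_opt_def A1_opt_def using H by (auto intro!: Inf_eq_attained_lower_bound)
qed

lemma redundant_POD_iff_PASOD:
  assumes "n < N"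
  shows "is_POD_pair K n N p F G \<longleftrightarrow> is_PASOD_pair K n N p F G"
  unfolding is_POD_pair_def is_PASOD_pair_def redundant_optimal_errors[OF assms]
  using dual_pair_error_bounds(3) by blast

lemma square_weight_le_A1:
  assumes "N = n" and pair: "dual_pair K n N F G" and i: "i \<in> {1..N}"
  shows "q i \<le> A1 K n N p F G"
proof -
  have F: "\<And>j. j \<in> {1..n} \<Longrightarrow> F j \<in> carrier_vec n"
    using dual_pair_hspace[OF pair] hspace_carrier assms(1) by blast
  have dual: "is_dual K n n F G"
    using pair assms(1) by (simp add: dual_pair_def)
  have "ip (G i) (F i) = 1"
    using square_dual_biorthogonal[where F = F and G = G, OF scalars dual F] i assms(1) by simp
  then have "q i \<le> (q i * vnorm (G i) * vnorm (F i) + q i * cmod (ip (G i) (F i))) / 2"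
    using dual_pair_radius_le_norm[OF pair i] by simp
  also have "\<dots> \<le> A1 K n N p F G"
    unfolding A1_dual_pair[OF pair] using i by (intro Max_ge) auto
  finally show ?thesis .
qed

lemma square_tight_canon_errors:
  assumes "N = n" and tight: "tight_frame_bound K n N F A"
  shows "O1 K n N p F (canon_dual K n N F) = Max (q ` {1..N})"
    and "A1 K n N p F (canon_dual K n N F) = Max (q ` {1..N})"
proof -
  have pos: "0 < A"
    using tight by (simp add: tight_frame_bound_def)
  have vnorm: "(vnorm (F i))\<^sup>2 = A" if "i \<in> {1..N}" for i
    using square_tight_frame_vnorm[OF scalars, of n F A i] tight that assms(1) by simp
  have "vnorm (canon_dual K n N F i) * vnorm (F i) = 1" if "i \<in> {1..N}" for i
    using vnorm[OF that] pos
    by (simp add: canon_dual_tight[OF scalars tight that] vnorm_smult norm_divide power2_eq_square)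
  then have norm: "q i * vnorm (canon_dual K n N F i) * vnorm (F i) = q i" if "i \<in> {1..N}" for i
    using that by (simp add: mult.assoc)
  have radius: "q i * cmod (ip (canon_dual K n N F i) (F i)) = q i" if "i \<in> {1..N}" for i
    using vnorm[OF that] pos by (simp add: ip_canon_dual_tight[OF scalars tight that])
  note pair = canon_dual_pair_tight[OF scalars tight]
  show "O1 K n N p F (canon_dual K n N F) = Max (q ` {1..N})"
    unfolding O1_dual_pair[OF pair] by (intro arg_cong[where f = Max] image_cong) (simp_all add: norm)
  show "A1 K n N p F (canon_dual K n N F) = Max (q ` {1..N})"
    unfolding A1_dual_pair[OF pair] by (intro arg_cong[where f = Max] image_cong) (simp_all add: norm radius)
qed

lemma square_tight_canon_optimal:
  assumes "N = n" and tight: "tight_frame_bound K n N F A"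
  shows "is_POD_pair K n N p F (canon_dual K n N F)"
    and "is_PASOD_pair K n N p F (canon_dual K n N F)"
proof -
  note pair = canon_dual_pair_tight[OF scalars tight]
  have "Max (q ` {1..N}) \<le> A1 K n N p F' G'" if "dual_pair K n N F' G'" for F' G'
    using square_weight_le_A1[OF assms(1) that] N_ge_2 by (simp add: Max_le_iff)
  then have lower: "Max (q ` {1..N}) \<le> A1 K n N p F' G'" "Max (q ` {1..N}) \<le> O1 K n N p F' G'"
    if "dual_pair K n N F' G'" for F' G'
    using dual_pair_error_bounds(2)[OF that] that by force+
  have "O1_opt K n N p = Max (q ` {1..N})" "A1_opt K n N p = Max (q ` {1..N})"
    unfolding O1_opt_def A1_opt_def using pair square_tight_canon_errors[OF assms] lower
    by (auto intro!: Inf_eq_attained_lower_bound)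
  then show "is_POD_pair K n N p F (canon_dual K n N F)"
    "is_PASOD_pair K n N p F (canon_dual K n N F)"
    using pair square_tight_canon_errors[OF assms] by (simp_all add: is_POD_pair_def is_PASOD_pair_def)
qed

end

theorem theorem4p4:
  fixes K :: "complex set" and n N :: nat and p :: "nat \<Rightarrow> real" and F :: "nat \<Rightarrow> complex vec"
  assumes field: "K = \<real> \<or> K = UNIV"
    and dim: "n \<ge> 1"
    and tight: "is_tight_frame K n N F"
    and prob: "prob_seq N p"
    and wdef: "\<forall>i\<in>{1..N}. p i < 1"
  shows "(is_POD_pair K n N p F (canon_dual K n N F) \<and>
          (\<forall>G. is_dual K n N F G \<and> is_POD_pair K n N p F G \<longrightarrow>
               (\<forall>i\<in>{1..N}. G i = canon_dual K n N F i)))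
     \<longleftrightarrow>
         (is_PASOD_pair K n N p F (canon_dual K n N F) \<and>
          (\<forall>G. is_dual K n N F G \<and> is_PASOD_pair K n N p F G \<longrightarrow>
               (\<forall>i\<in>{1..N}. G i = canon_dual K n N F i)))"
proof -
  interpret erasure_setting K n N p
    using field dim prob wdef by unfold_locales
  obtain A where A: "tight_frame_bound K n N F A"
    using tight by (auto simp: is_tight_frame_iff)
  have "n \<le> N"
    by (rule tight_frame_length_ge[OF field A])
  then consider (square) "N = n" | (redundant) "n < N"
    by linarith
  then show ?thesis
  proof cases
    case square
    have "G i = canon_dual K n N F i" if "is_dual K n N F G" "i \<in> {1..N}" for G i
      using square_tight_dual_unique[OF field, of n F A G i] A that square by simp
    then show ?thesis
      using square_tight_canon_optimal[OF square A] by blast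
  next
    case redundant
    then show ?thesis
      by (simp add: redundant_POD_iff_PASOD)
  qed
qed

end
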